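(* Let $R$ be a ring and let $\mathcal{S}$ be a sublattice of the lattice $\mathbb{I}(R)$ of two-sided ideals of $R$ which is closed under arbitrary intersections and contains $\{0\}$ and $R$. Suppose that for each $I\in\mathcal{S}$ we have $I=\ker(\{\mathfrak{p}\in\mathrm{Spec}_{\mathcal{S}}(R):\mathfrak{p}\supseteq I\})$. Let $\mathbb{O}(\mathrm{Spec}_{\mathcal{S}}(R))$ be the lattice of open subsets of $\mathrm{Spec}_{\mathcal{S}}(R)$ in the Jacobson topology, and define $\phi\colon \mathbb{O}(\mathrm{Spec}_{\mathcal{S}}(R))\to\mathcal{S}$ by $\phi(U)=\ker(U^c)$. Then $\phi$ is a lattice isomorphism.
   Context: An ideal $P\in\mathcal{S}$ is $\mathcal{S}$-prime if $P\neq R$ and for all $I,J\in\mathcal{S}$, $IJ\subseteq P$ implies $I\subseteq P$ or $J\subseteq P$; $\mathrm{Spec}_{\mathcal{S}}(R)$ is the set of $\mathcal{S}$-prime ideals. For $T\subseteq\mathrm{Spec}_{\mathcal{S}}(R)$, $\ker(T)=\bigcap_{\mathfrak{p}\in T}\mathfrak{p}$ (with $\ker(\emptyset)=R$), and $U^c$ denotes complement in $\mathrm{Spec}_{\mathcal{S}}(R)$. The Jacobson topology is the topology whose closure operation is $\overline{T}=\{\mathfrak{p}\in\mathrm{Spec}_{\mathcal{S}}(R):\mathfrak{p}\supseteq\ker(T)\}$. *)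

theory Defs
  imports "HOL-Algebra.Ideal_Product"
begin

definition S_prime :: "('a, 'b) ring_scheme \<Rightarrow> 'a set set \<Rightarrow> 'a set \<Rightarrow> bool" where
  "S_prime R S P \<longleftrightarrow> P \<in> S \<and> P \<noteq> carrier R \<and>
     (\<forall>I\<in>S. \<forall>J\<in>S. ideal_prod R I J \<subseteq> P \<longrightarrow> I \<subseteq> P \<or> J \<subseteq> P)"

definition SpecS :: "('a, 'b) ring_scheme \<Rightarrow> 'a set set \<Rightarrow> 'a set set" where
  "SpecS R S = {P. S_prime R S P}"

text \<open>ker(T) = intersection of the members of T, with ker of the empty family = R.\<close>
definition kerS :: "('a, 'b) ring_scheme \<Rightarrow> 'a set set \<Rightarrow> 'a set" where
  "kerS R T = carrier R \<inter> \<Inter> T"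

definition jclosure :: "('a, 'b) ring_scheme \<Rightarrow> 'a set set \<Rightarrow> 'a set set \<Rightarrow> 'a set set" where
  "jclosure R S T = {p \<in> SpecS R S. kerS R T \<subseteq> p}"

definition jacobson_opens :: "('a, 'b) ring_scheme \<Rightarrow> 'a set set \<Rightarrow> 'a set set set" where
  "jacobson_opens R S =
     {U. U \<subseteq> SpecS R S \<and> jclosure R S (SpecS R S - U) = SpecS R S - U}"

definition phiS :: "('a, 'b) ring_scheme \<Rightarrow> 'a set set \<Rightarrow> 'a set set \<Rightarrow> 'a set" where
  "phiS R S U = kerS R (SpecS R S - U)"

end

theory Submission
  imports Defs
begin

text \<open>By the hypothesis \<open>I = ker {p. I \<subseteq> p}\<close>, every member of \<open>S\<close> is the kernel of a
  Jacobson-closed set, and for an open \<open>U\<close> the closed set \<open>Spec - U\<close> is recovered from its kernel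
  as the primes above \<open>\<phi>(U)\<close>; so \<open>\<phi>\<close> is bijective. Intersections of opens go to intersections
  of kernels directly. For unions, a prime contains \<open>\<phi>(U) + \<phi>(V)\<close> iff it contains both summands,
  i.e. iff it lies outside \<open>U \<union> V\<close>; since \<open>\<phi>(U) + \<phi>(V) \<in> S\<close> is again the kernel of the primes
  above it, it equals \<open>\<phi>(U \<union> V)\<close>.\<close>

lemma (in ring) set_add_subset_ideal_iff:
  assumes "ideal I R" "ideal J R" "ideal P R"
  shows "I <+> J \<subseteq> P \<longleftrightarrow> I \<subseteq> P \<and> J \<subseteq> P"
proof -
  have sum_eq: "Idl (I \<union> J) = I <+> J"
    using union_genideal[OF assms(1,2)] .
  have "I \<union> J \<subseteq> carrier R"
    using assms(1,2) ideal.Icarr by (metis Un_subset_iff subsetI)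
  then have "I \<union> J \<subseteq> I <+> J"
    unfolding sum_eq[symmetric] by (rule genideal_self)
  moreover have "I \<union> J \<subseteq> P \<Longrightarrow> I <+> J \<subseteq> P"
    unfolding sum_eq[symmetric] by (rule genideal_minimal[OF assms(3)])
  ultimately show ?thesis
    by blast
qed

lemma SpecS_subset: "SpecS R S \<subseteq> S"
  by (auto simp: SpecS_def S_prime_def)

lemma phiS_mem:
  assumes "\<forall>F. F \<subseteq> S \<longrightarrow> carrier R \<inter> \<Inter> F \<in> S"
  shows "phiS R S U \<in> S"
  unfolding phiS_def kerS_def using assms SpecS_subset[of R S] by (meson Diff_subset order_trans)

lemma jacobson_opens_subset: "U \<in> jacobson_opens R S \<Longrightarrow> U \<subseteq> SpecS R S"
  by (simp add: jacobson_opens_def)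

lemma primes_above_phiS:
  "U \<in> jacobson_opens R S \<Longrightarrow> {p \<in> SpecS R S. phiS R S U \<subseteq> p} = SpecS R S - U"
  by (simp add: jacobson_opens_def jclosure_def phiS_def)

lemma inj_on_phiS: "inj_on (phiS R S) (jacobson_opens R S)"
proof (rule inj_onI)
  fix U V
  assume U: "U \<in> jacobson_opens R S" and V: "V \<in> jacobson_opens R S"
    and "phiS R S U = phiS R S V"
  then have "SpecS R S - U = SpecS R S - V"
    using primes_above_phiS[OF U] primes_above_phiS[OF V] by simp
  then show "U = V"
    using jacobson_opens_subset[OF U] jacobson_opens_subset[OF V] by blast
qed

lemma phiS_Int: "phiS R S (U \<inter> V) = phiS R S U \<inter> phiS R S V"
  by (auto simp: phiS_def kerS_def)

lemma kernel_of_primes_above_in_phiS_image: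
  assumes "I = kerS R {p \<in> SpecS R S. I \<subseteq> p}"
  shows "I \<in> phiS R S ` jacobson_opens R S"
proof
  let ?U = "SpecS R S - {p \<in> SpecS R S. I \<subseteq> p}"
  have compl: "SpecS R S - ?U = {p \<in> SpecS R S. I \<subseteq> p}"
    by blast
  then show "?U \<in> jacobson_opens R S"
    using assms by (auto simp: jacobson_opens_def jclosure_def)
  show "I = phiS R S ?U"
    using assms compl by (simp add: phiS_def)
qed

lemma phiS_Un:
  assumes "ring R" and ideals: "\<forall>I\<in>S. ideal I R"
    and sums: "\<forall>I\<in>S. \<forall>J\<in>S. I <+>\<^bsub>R\<^esub> J \<in> S"
    and meets: "\<forall>F. F \<subseteq> S \<longrightarrow> carrier R \<inter> \<Inter> F \<in> S"
    and kernels: "\<forall>I\<in>S. I = kerS R {p \<in> SpecS R S. I \<subseteq> p}"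
    and U: "U \<in> jacobson_opens R S" and V: "V \<in> jacobson_opens R S"
  shows "phiS R S (U \<union> V) = phiS R S U <+>\<^bsub>R\<^esub> phiS R S V"
proof -
  let ?I = "phiS R S U" and ?J = "phiS R S V"
  have I: "?I \<in> S" and J: "?J \<in> S"
    using phiS_mem[OF meets] by auto
  have "{p \<in> SpecS R S. ?I <+>\<^bsub>R\<^esub> ?J \<subseteq> p}
      = {p \<in> SpecS R S. ?I \<subseteq> p} \<inter> {p \<in> SpecS R S. ?J \<subseteq> p}"
    using ring.set_add_subset_ideal_iff[OF \<open>ring R\<close>] I J SpecS_subset[of R S] ideals
    by blast
  also have "\<dots> = SpecS R S - (U \<union> V)"
    using primes_above_phiS[OF U] primes_above_phiS[OF V] by blast
  finally have "kerS R {p \<in> SpecS R S. ?I <+>\<^bsub>R\<^esub> ?J \<subseteq> p} = phiS R S (U \<union> V)"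
    by (simp add: phiS_def)
  with kernels sums I J show ?thesis
    by metis
qed

theorem theorem3p4:
  fixes R :: "('a, 'b) ring_scheme" and S :: "'a set set"
  assumes "ring R"
    and "\<forall>I\<in>S. ideal I R"
    and "\<forall>I\<in>S. \<forall>J\<in>S. I \<inter> J \<in> S"
    and "\<forall>I\<in>S. \<forall>J\<in>S. I <+>\<^bsub>R\<^esub> J \<in> S"
    and "\<forall>F. F \<subseteq> S \<longrightarrow> carrier R \<inter> \<Inter> F \<in> S"
    and "{\<zero>\<^bsub>R\<^esub>} \<in> S"
    and "carrier R \<in> S"
    and "\<forall>I\<in>S. I = kerS R {p \<in> SpecS R S. I \<subseteq> p}"
  shows "bij_betw (phiS R S) (jacobson_opens R S) S \<and>
    (\<forall>U\<in>jacobson_opens R S. \<forall>V\<in>jacobson_opens R S.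
        phiS R S (U \<inter> V) = phiS R S U \<inter> phiS R S V \<and>
        phiS R S (U \<union> V) = phiS R S U <+>\<^bsub>R\<^esub> phiS R S V)"
proof -
  have "S \<subseteq> phiS R S ` jacobson_opens R S"
    using kernel_of_primes_above_in_phiS_image[OF bspec[OF assms(8)]] by blast
  moreover have "phiS R S ` jacobson_opens R S \<subseteq> S"
    using phiS_mem[OF assms(5)] by blast
  ultimately have "bij_betw (phiS R S) (jacobson_opens R S) S"
    using inj_on_phiS by (simp add: bij_betw_def)
  moreover have "phiS R S (U \<union> V) = phiS R S U <+>\<^bsub>R\<^esub> phiS R S V"
    if "U \<in> jacobson_opens R S" "V \<in> jacobson_opens R S" for U V
    using phiS_Un[OF assms(1,2,4,5,8) that] .
  ultimately show ?thesis
    by (simp add: phiS_Int)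
qed

end
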